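(* For every integer $q\ge2$ there exists a constant $c_6>0$ depending only on $q$ such that for every positive integer $k$ there exists a positive integer $n\le \exp(c_6k)$ with $s_q(kn)=k$. Consequently, for every $k\ge1$ the number $a_k$ (in base $q$) exists and $a_k=\exp(O_q(k))$.
   Context: For an integer base $q\ge2$, $s_q(m)$ denotes the sum of the base-$q$ digits of the nonnegative integer $m$, and $a_k$ denotes the smallest positive multiple of $k$ with $s_q(a_k)=k$. *)

theory Defs
  imports Complex_Main
begin

function digit_sum :: "nat \<Rightarrow> nat \<Rightarrow> nat" where
  "digit_sum q m = (if q < 2 \<or> m = 0 then 0 else m mod q + digit_sum q (m div q))"
  by auto
termination
  by (relation "measure snd") auto

declare digit_sum.simps[simp del]

definition a_seq :: "nat \<Rightarrow> nat \<Rightarrow> nat" where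
  "a_seq q k = (LEAST m. m > 0 \<and> k dvd m \<and> digit_sum q m = k)"

end

theory Submission
  imports Defs
begin

(* Everything
   rests on one additivity fact: digit sums add under concatenation of digit blocks.
   Two constructions cover all k:
   - k >= 3q: write k = s_q(k) + (q - 1) A (the digit sum is congruent to k modulo
     q - 1, with A >= k div q); then k < q^A, and k (q^A - 1) has digit sum A (q - 1),
     so n = 1 + q^k (q^A - 1) gives k n = k followed by k (q^A - 1); n <= q^(2k).
   - any k: by pigeonhole q^i = q^(i+d) modulo k with i + d <= k; the number
     q^i (1 + q^d + ... + q^((k-1) d)) is a multiple of k with k digits 1, giving
     n <= q^(k + k^2), which is at most q^((3q + 1) k) when k < 3q. *)

lemma digit_sum_zero [simp]: "digit_sum q 0 = 0"
  by (subst digit_sum.simps) simp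

lemma digit_sum_rec:
  assumes "q \<ge> 2"
  shows "digit_sum q m = m mod q + digit_sum q (m div q)"
  using assms by (cases "m = 0") (simp, subst digit_sum.simps, simp)

lemma digit_sum_digit:
  assumes "q \<ge> 2" and "d < q"
  shows "digit_sum q d = d"
  using assms by (subst digit_sum_rec) auto

text \<open>The excess m - s(m) is a multiple (q - 1) A of q - 1 with A at least m div q:
  removing the last digit of m lowers the excess by (q - 1) (m div q).\<close>
lemma digit_sum_excess:
  assumes q: "q \<ge> 2"
  shows "\<exists>A. m = digit_sum q m + (q - 1) * A \<and> m div q \<le> A"
proof (induction m rule: less_induct)
  case (less m)
  show ?case
  proof (cases "m = 0")
    case True
    then show ?thesis by simp
  next
    case False
    with q have "m div q < m" by simp
    with less obtain A where A: "m div q = digit_sum q (m div q) + (q - 1) * A" by blast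
    have "m = m mod q + q * (m div q)" by simp
    also have "q * (m div q) = m div q + (q - 1) * (m div q)"
      using q by (cases q) auto
    finally have "m = digit_sum q m + (q - 1) * (m div q + A)"
      using A digit_sum_rec[OF q, of m] by (simp add: algebra_simps)
    then show ?thesis by (intro exI[of _ "m div q + A"]) simp
  qed
qed

lemma digit_sum_concat:
  assumes q: "q \<ge> 2" and a: "a < q ^ B"
  shows "digit_sum q (a + q ^ B * b) = digit_sum q a + digit_sum q b"
  using a
proof (induction B arbitrary: a)
  case 0
  then show ?case by simp
next
  case (Suc B)
  from q have "(a + q ^ Suc B * b) mod q = a mod q"
    and "(a + q ^ Suc B * b) div q = a div q + q ^ B * b"
    by (simp_all add: mult.assoc)
  moreover from Suc.prems q have "a div q < q ^ B"
    by (simp add: div_less_iff_less_mult mult.commute)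
  ultimately show ?case
    using Suc.IH digit_sum_rec[OF q, of a] digit_sum_rec[OF q, of "a + q ^ Suc B * b"] by simp
qed

lemma digit_sum_shift:
  assumes "q \<ge> 2"
  shows "digit_sum q (q ^ B * b) = digit_sum q b"
  using digit_sum_concat[OF assms, of 0 B b] assms by simp

lemma digit_sum_complement:
  assumes q: "q \<ge> 2" and y: "y < q ^ A"
  shows "digit_sum q y + digit_sum q (q ^ A - 1 - y) = A * (q - 1)"
  using y
proof (induction A arbitrary: y)
  case 0
  then show ?case by simp
next
  case (Suc A)
  define y0 y1 where "y0 = y mod q" and "y1 = y div q"
  have y: "y = y0 + q * y1" and y0: "y0 < q"
    using q unfolding y0_def y1_def by simp_all
  have y1: "y1 < q ^ A"
    using Suc.prems q unfolding y1_def by (simp add: div_less_iff_less_mult mult.commute)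
  have "q * (y1 + 1) \<le> q ^ Suc A"
    using mult_le_mono2[of "y1 + 1" "q ^ A" q] y1 by simp
  then have compl: "q ^ Suc A - 1 - y = (q - 1 - y0) + q * (q ^ A - 1 - y1)"
    using y y0 by (simp add: algebra_simps diff_mult_distrib2)
  have "digit_sum q y = y0 + digit_sum q y1"
    using digit_sum_concat[OF q, of y0 1 y1] y y0 digit_sum_digit[OF q y0] by simp
  moreover have "digit_sum q (q ^ Suc A - 1 - y) = (q - 1 - y0) + digit_sum q (q ^ A - 1 - y1)"
    using digit_sum_concat[OF q, of "q - 1 - y0" 1] compl digit_sum_digit[OF q, of "q - 1 - y0"] q
    by simp
  ultimately show ?case
    using Suc.IH[OF y1] y0 by simp
qed

text \<open>Every multiple x (q^A - 1) with 1 \<le> x \<le> q^A has digit sum A (q - 1),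
  since it is the concatenation of x - 1 and its complement q^A - x.\<close>
lemma digit_sum_mult_pow_minus_one:
  assumes q: "q \<ge> 2" and x: "1 \<le> x" "x \<le> q ^ A"
  shows "digit_sum q (x * (q ^ A - 1)) = A * (q - 1)"
proof -
  have split: "x * (q ^ A - 1) = (q ^ A - 1 - (x - 1)) + q ^ A * (x - 1)"
    using x by (simp add: algebra_simps diff_mult_distrib diff_mult_distrib2)
  have below: "x - 1 < q ^ A"
    using x by simp
  have "digit_sum q (x * (q ^ A - 1)) = digit_sum q (q ^ A - 1 - (x - 1)) + digit_sum q (x - 1)"
    unfolding split by (rule digit_sum_concat[OF q]) (use x in simp)
  also have "\<dots> = A * (q - 1)"
    using digit_sum_complement[OF q below] by (simp add: add.commute)
  finally show ?thesis .
qed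

definition spaced_ones :: "nat \<Rightarrow> nat \<Rightarrow> nat \<Rightarrow> nat" where
  "spaced_ones q d L = (\<Sum>l<L. q ^ (l * d))"

lemma spaced_ones_Suc: "spaced_ones q d (Suc L) = 1 + q ^ d * spaced_ones q d L"
  unfolding spaced_ones_def
  by (subst sum.lessThan_Suc_shift) (simp add: sum_distrib_left power_add del: sum.lessThan_Suc)

lemma digit_sum_spaced_ones:
  assumes q: "q \<ge> 2" and d: "d \<ge> 1"
  shows "digit_sum q (spaced_ones q d L) = L"
proof (induction L)
  case 0
  then show ?case by (simp add: spaced_ones_def)
next
  case (Suc L)
  have "1 < q ^ d"
    using q d by (intro one_less_power) auto
  then show ?case
    using Suc.IH digit_sum_concat[OF q, of 1 d] digit_sum_digit[OF q, of 1] q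
    by (simp add: spaced_ones_Suc)
qed

lemma spaced_ones_less:
  assumes q: "q \<ge> 2" and d: "d \<ge> 1"
  shows "spaced_ones q d L < q ^ (d * L)"
proof (induction L)
  case 0
  then show ?case by (simp add: spaced_ones_def)
next
  case (Suc L)
  have "1 < q ^ d"
    using q d by (intro one_less_power) auto
  moreover have "q ^ d * (spaced_ones q d L + 1) \<le> q ^ d * q ^ (d * L)"
    using Suc.IH by (intro mult_le_mono2) simp
  ultimately show ?case
    by (simp add: spaced_ones_Suc power_add algebra_simps)
qed

text \<open>An elementary growth estimate used to show k < q^(k div q) for k >= 3q.\<close>
lemma linear_le_power:
  assumes q: "q \<ge> 2" and t: "t \<ge> 3"
  shows "q * (t + 1) \<le> q ^ t"
  using t
proof (induction t rule: dec_induct)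
  case base
  have "q * 4 \<le> q * (q * q)"
    using q mult_le_mono[OF q q] by (intro mult_le_mono2) simp
  then show ?case
    by (simp add: power3_eq_cube)
next
  case (step t)
  have "q * (Suc t + 1) \<le> q * (t + 1) * 2"
    by simp
  also have "\<dots> \<le> q ^ t * q"
    using step.IH q by (intro mult_le_mono) auto
  finally show ?case
    by (simp add: mult.commute)
qed

text \<open>Large k: with k = s(k) + (q - 1) A we have k < q^A, so the multiplier
  n = 1 + q^k (q^A - 1) makes k n the concatenation of k with k (q^A - 1),
  whose digit sums are s(k) and A (q - 1).\<close>
lemma witness_large:
  assumes q: "q \<ge> 2" and k: "k \<ge> 3 * q"
  shows "\<exists>n\<ge>1. n \<le> q ^ (2 * k) \<and> digit_sum q (k * n) = k"
proof -
  obtain A where kA: "k = digit_sum q k + (q - 1) * A" and A_ge: "k div q \<le> A"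
    using digit_sum_excess[OF q] by blast
  have "A \<le> (q - 1) * A"
    using q by (simp add: Suc_le_eq)
  with kA have A_le: "A \<le> k"
    by linarith
  have "3 \<le> k div q"
    using div_le_mono[OF k, of q] q by simp
  moreover have "k < q * (k div q + 1)"
    using q mult_div_mod_eq[of q k] mod_less_divisor[of q k] unfolding distrib_left by linarith
  ultimately have "k < q ^ (k div q)"
    using linear_le_power[OF q] by (meson less_le_trans)
  also have "\<dots> \<le> q ^ A"
    using A_ge q by (simp add: power_increasing)
  finally have k_less: "k < q ^ A" .
  have k_less_pow: "k < q ^ k"
    using less_le_trans[OF less_exp[of k] power_mono[of 2 q k]] q by simp
  define n where "n = 1 + q ^ k * (q ^ A - 1)"
  have "k * n = k + q ^ k * (k * (q ^ A - 1))"
    unfolding n_def by (simp add: algebra_simps)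
  then have "digit_sum q (k * n) = digit_sum q k + digit_sum q (k * (q ^ A - 1))"
    using digit_sum_concat[OF q k_less_pow] by simp
  also have "\<dots> = k"
    using digit_sum_mult_pow_minus_one[OF q _ less_imp_le[OF k_less]] k q kA
    by (simp add: mult.commute)
  finally have digits: "digit_sum q (k * n) = k" .
  have "1 \<le> q ^ k" and "q ^ k \<le> q ^ k * q ^ A"
    using q by simp_all
  then have "n \<le> q ^ k * q ^ A"
    unfolding n_def diff_mult_distrib2 mult_1_right by linarith
  also have "\<dots> \<le> q ^ (2 * k)"
    using A_le q by (simp add: power_add[symmetric] power_increasing)
  finally have "n \<le> q ^ (2 * k)" .
  moreover have "n \<ge> 1"
    unfolding n_def by simp
  ultimately show ?thesis
    using digits by blast
qed

lemma power_mod_repeats: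
  fixes q k :: nat
  assumes k: "k \<ge> 1"
  shows "\<exists>i j. i < j \<and> j \<le> k \<and> q ^ i mod k = q ^ j mod k"
proof -
  have "\<not> inj_on (\<lambda>i. q ^ i mod k) {0..k}"
  proof
    assume "inj_on (\<lambda>i. q ^ i mod k) {0..k}"
    moreover have "(\<lambda>i. q ^ i mod k) ` {0..k} \<subseteq> {0..<k}"
      using k by auto
    ultimately have "card {0..k} \<le> card {0..<k}"
      by (rule card_inj_on_le) simp
    then show False
      by simp
  qed
  then obtain i j where "i \<le> k" "j \<le> k" "i \<noteq> j" "q ^ i mod k = q ^ j mod k"
    unfolding inj_on_def by auto
  then show ?thesis
    by (metis nat_neq_iff)
qed

lemma power_mod_periodic:
  fixes q k :: nat
  assumes rep: "q ^ (i + d) mod k = q ^ i mod k"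
  shows "q ^ (i + l * d) mod k = q ^ i mod k"
proof (induction l)
  case 0
  then show ?case by simp
next
  case (Suc l)
  have "q ^ (i + Suc l * d) mod k = q ^ (i + l * d) * q ^ d mod k"
    by (simp add: power_add algebra_simps)
  also have "\<dots> = (q ^ (i + l * d) mod k) * q ^ d mod k"
    by (simp add: mod_mult_left_eq)
  also have "\<dots> = q ^ (i + d) mod k"
    using Suc.IH by (simp add: power_add mod_mult_left_eq)
  finally show ?case
    using rep by simp
qed

text \<open>Any k: if q^i = q^(i+d) modulo k, then q^i times the number with k ones spaced
  d apart is a multiple of k (a sum of k equal residues) with digit sum k.\<close>
lemma witness_periodic:
  assumes q: "q \<ge> 2" and k: "k \<ge> 1"
  shows "\<exists>n\<ge>1. n \<le> q ^ (k + k * k) \<and> digit_sum q (k * n) = k"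
proof -
  obtain i j where ij: "i < j" "j \<le> k" "q ^ i mod k = q ^ j mod k"
    using power_mod_repeats[OF k] by blast
  define d where "d = j - i"
  have d: "1 \<le> d" "d \<le> k" "j = i + d"
    using ij unfolding d_def by auto
  define m where "m = q ^ i * spaced_ones q d k"
  have "m = (\<Sum>l<k. q ^ (i + l * d))"
    unfolding m_def spaced_ones_def by (simp add: sum_distrib_left power_add)
  then have "m mod k = (\<Sum>l<k. q ^ (i + l * d) mod k) mod k"
    by (simp add: mod_sum_eq)
  also have "\<dots> = k * (q ^ i mod k) mod k"
    using power_mod_periodic[of q i d k] ij d by simp
  finally have "k dvd m"
    by (simp add: dvd_eq_mod_eq_0)
  then obtain n where n: "m = k * n" ..
  have digits: "digit_sum q m = k"
    unfolding m_def using digit_sum_shift[OF q] digit_sum_spaced_ones[OF q d(1)] by simp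
  with k n have "n \<ge> 1"
    by (cases n) auto
  have "n \<le> m"
    using n k by simp
  also have "m < q ^ i * q ^ (d * k)"
    unfolding m_def using spaced_ones_less[OF q d(1)] q by simp
  also have "\<dots> \<le> q ^ (k + k * k)"
    using q ij d by (simp add: power_add[symmetric] power_increasing add_le_mono mult_le_mono1)
  finally show ?thesis
    using \<open>n \<ge> 1\<close> digits n by auto
qed

text \<open>Combining both constructions: a multiplier of size at most q^((3q + 1) k) exists
  for every k (for k < 3q the quadratic exponent k + k^2 is at most (3q + 1) k).\<close>
lemma witness:
  assumes q: "q \<ge> 2" and k: "k \<ge> 1"
  shows "\<exists>n\<ge>1. n \<le> q ^ ((3 * q + 1) * k) \<and> digit_sum q (k * n) = k"
proof (cases "k \<ge> 3 * q")
  case True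
  have "q ^ (2 * k) \<le> q ^ ((3 * q + 1) * k)"
    using q by (intro power_increasing) auto
  with witness_large[OF q True] show ?thesis
    by (meson le_trans)
next
  case False
  then have "k + k * k \<le> (3 * q + 1) * k"
    by (simp add: algebra_simps)
  then have "q ^ (k + k * k) \<le> q ^ ((3 * q + 1) * k)"
    using q by (intro power_increasing) auto
  with witness_periodic[OF q k] show ?thesis
    by (meson le_trans)
qed

lemma witness_exp:
  assumes q: "q \<ge> 2" and k: "k \<ge> 1"
  shows "\<exists>n\<ge>1. real n \<le> exp (real (3 * q + 1) * ln (real q) * real k) \<and> digit_sum q (k * n) = k"
proof -
  have "exp (real (3 * q + 1) * ln (real q) * real k) = exp (real ((3 * q + 1) * k) * ln (real q))"
    by (simp add: algebra_simps)
  also have "\<dots> = exp (ln (real q)) ^ ((3 * q + 1) * k)"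
    by (rule exp_of_nat_mult)
  also have "\<dots> = real (q ^ ((3 * q + 1) * k))"
    using q by simp
  finally show ?thesis
    using witness[OF q k] by (metis of_nat_le_iff)
qed

text \<open>Any admissible multiple k n bounds a_k; since k \<le> exp k, a bound n \<le> exp(c k)
  yields a_k \<le> exp((c + 1) k).\<close>
lemma a_seq_exp_bound:
  assumes k: "k \<ge> 1" and n: "n \<ge> 1" "real n \<le> exp (c * real k)" "digit_sum q (k * n) = k"
  shows "real (a_seq q k) \<le> exp ((c + 1) * real k)"
proof -
  have "a_seq q k \<le> k * n"
    unfolding a_seq_def using k n by (intro Least_le) auto
  then have "real (a_seq q k) \<le> real k * real n"
    by (metis of_nat_le_iff of_nat_mult)
  also have "\<dots> \<le> exp (real k) * exp (c * real k)"
  proof (rule mult_mono)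
    show "real k \<le> exp (real k)"
      using exp_ge_add_one_self[of "real k"] by linarith
  qed (use n(2) in auto)
  finally show ?thesis
    by (simp add: exp_add[symmetric] algebra_simps)
qed

theorem mainTheorem14:
  fixes q :: nat
  assumes "q \<ge> 2"
  shows "(\<exists>c6>0. \<forall>k::nat. k \<ge> 1 \<longrightarrow>
            (\<exists>n::nat. n \<ge> 1 \<and> real n \<le> exp (c6 * real k) \<and> digit_sum q (k * n) = k))
       \<and> (\<forall>k::nat. k \<ge> 1 \<longrightarrow> (\<exists>m::nat. m > 0 \<and> k dvd m \<and> digit_sum q m = k))
       \<and> (\<exists>C>0. \<forall>k::nat. k \<ge> 1 \<longrightarrow> real (a_seq q k) \<le> exp (C * real k))"
proof -
  define c where "c = real (3 * q + 1) * ln (real q)"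
  have c_pos: "c > 0"
    unfolding c_def using assms by simp
  have multiplier: "\<exists>n\<ge>1. real n \<le> exp (c * real k) \<and> digit_sum q (k * n) = k"
    if "k \<ge> 1" for k
    unfolding c_def using witness_exp[OF assms that] .
  have "\<exists>m>0. k dvd m \<and> digit_sum q m = k" if "k \<ge> 1" for k
    using multiplier[OF that] that by (metis dvd_triv_left nat_0_less_mult_iff less_eq_Suc_le One_nat_def)
  moreover have "real (a_seq q k) \<le> exp ((c + 1) * real k)" if "k \<ge> 1" for k
    using multiplier[OF that] a_seq_exp_bound[OF that] by blast
  ultimately show ?thesis
    using multiplier c_pos by (intro conjI exI[of _ c] exI[of _ "c + 1"]) auto
qed

end
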